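(* Let $R$ be a unital amenable affine algebra over a field $K$, with a fixed Følner exhaustion $\{W_n\}_{n\ge1}$ and a fixed ultralimit $\lim_\omega$. For a finitely generated left $R$-module $M=\sum_{i=1}^r Rx_i$, the quantity $$\mathrm{rank}(M)=\lim_\omega\frac{\dim_K(W_nx_1+\cdots+W_nx_r)}{\dim_K(W_n)}$$ does not depend on the choice of the generating set $\{x_1,\dots,x_r\}$ of $M$. Moreover, $\mathrm{rank}(M)$ is at most the minimal number of elements generating $M$ as an $R$-module.
   Context: An affine algebra is a finitely generated associative algebra over $K$. A Følner exhaustion is a sequence of finite-dimensional $K$-subspaces $W_1\subseteq W_2\subseteq\cdots$ with $\bigcup_nW_n=R$ such that for every $r\in R$, $\lim_{n\to\infty}\dim_K(W_nr+W_n)/\dim_K(W_n)=1$; $R$ is amenable if one exists. $\omega$ is an ultrafilter on $\mathbb N$ and $\lim_\omega:\ell^\infty(\mathbb N)\to\mathbb R$ the corresponding linear functional with $\liminf a_n\le\lim_\omega a_n\le\limsup a_n$, agreeing with the usual limit on convergent sequences. $W_nx=\{wx:w\in W_n\}$. *)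

theory Defs
  imports Complex_Main
begin

definition k_algebra :: "('k::field \<Rightarrow> 'r::ring_1 \<Rightarrow> 'r) \<Rightarrow> bool" where
  "k_algebra s \<longleftrightarrow> vector_space s \<and>
     (\<forall>c a b. s c (a * b) = s c a * b \<and> s c (a * b) = a * s c b)"

definition k_subalgebra :: "('k::field \<Rightarrow> 'r::ring_1 \<Rightarrow> 'r) \<Rightarrow> 'r set \<Rightarrow> bool" where
  "k_subalgebra s A \<longleftrightarrow> module.subspace s A \<and> 1 \<in> A \<and> (\<forall>a\<in>A. \<forall>b\<in>A. a * b \<in> A)"

definition affine_algebra :: "('k::field \<Rightarrow> 'r::ring_1 \<Rightarrow> 'r) \<Rightarrow> bool" where
  "affine_algebra s \<longleftrightarrow> k_algebra s \<and>
     (\<exists>G. finite G \<and> (\<forall>A. k_subalgebra s A \<and> G \<subseteq> A \<longrightarrow> A = UNIV))"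

definition folner_exhaustion :: "('k::field \<Rightarrow> 'r::ring_1 \<Rightarrow> 'r) \<Rightarrow> (nat \<Rightarrow> 'r set) \<Rightarrow> bool" where
  "folner_exhaustion s W \<longleftrightarrow>
     (\<forall>n. module.subspace s (W n) \<and> (\<exists>B. finite B \<and> W n = module.span s B)) \<and>
     (\<forall>n. W n \<subseteq> W (Suc n)) \<and> (\<Union>n. W n) = UNIV \<and>
     (\<forall>r. (\<lambda>n. real (vector_space.dim s ((\<lambda>w. w * r) ` W n \<union> W n))
                 / real (vector_space.dim s (W n))) \<longlonglongrightarrow> 1)"

definition ultrafilter :: "'a filter \<Rightarrow> bool" where
  "ultrafilter F \<longleftrightarrow> F \<noteq> bot \<and> (\<forall>P. eventually P F \<or> eventually (\<lambda>x. \<not> P x) F)"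

definition left_module :: "('r::ring_1 \<Rightarrow> 'm::ab_group_add \<Rightarrow> 'm) \<Rightarrow> bool" where
  "left_module act \<longleftrightarrow> (\<forall>m. act 1 m = m) \<and> (\<forall>a b m. act (a * b) m = act a (act b m)) \<and>
     (\<forall>a b m. act (a + b) m = act a m + act b m) \<and> (\<forall>a m n. act a (m + n) = act a m + act a n)"

definition generates :: "('r::ring_1 \<Rightarrow> 'm::ab_group_add \<Rightarrow> 'm) \<Rightarrow> 'm list \<Rightarrow> bool" where
  "generates act xs \<longleftrightarrow> (\<forall>m. \<exists>c. m = (\<Sum>i<length xs. act (c i) (xs ! i)))"

definition mscale :: "('k::field \<Rightarrow> 'r::ring_1 \<Rightarrow> 'r) \<Rightarrow> ('r \<Rightarrow> 'm::ab_group_add \<Rightarrow> 'm) \<Rightarrow> 'k \<Rightarrow> 'm \<Rightarrow> 'm" where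
  "mscale s act c m = act (s c 1) m"

definition rank_gen :: "('k::field \<Rightarrow> 'r::ring_1 \<Rightarrow> 'r) \<Rightarrow> ('r \<Rightarrow> 'm::ab_group_add \<Rightarrow> 'm) \<Rightarrow>
    nat filter \<Rightarrow> (nat \<Rightarrow> 'r set) \<Rightarrow> 'm list \<Rightarrow> real" where
  "rank_gen s act \<omega> W xs = Lim \<omega> (\<lambda>n.
      real (vector_space.dim (mscale s act) (\<Union>i<length xs. (\<lambda>w. act w (xs ! i)) ` W n))
      / real (vector_space.dim s (W n)))"

end

theory Submission
  imports Defs "HOL-Analysis.Elementary_Topology"
begin

(* If y_j = \<Sum>_i c_ji x_i then W y_j \<subseteq> \<Sum>_i (W c_ji + W) x_i, and W c + W exceeds W by
   dim (W c + W) - dim W dimensions, which is o(dim W) by the Foelner condition.  Hence the ratios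
   dim (\<Sum>_j W y_j) / dim W and dim (\<Sum>_i W x_i) / dim W of two generating lists differ by o(1),
   so their ultralimits agree.  Since dim (\<Sum>_j W y_j) \<le> r dim W for r generators, the ratio of a
   minimal generating list lies in [0, r], where the ultralimit exists by compactness. *)

lemma ultrafilter_tendsto_compact:
  fixes f :: "'a \<Rightarrow> 'b::topological_space"
  assumes F: "ultrafilter F" and K: "compact K" and fK: "eventually (\<lambda>x. f x \<in> K) F"
  obtains L where "L \<in> K" "(f \<longlongrightarrow> L) F"
proof -
  have "filtermap f F \<noteq> bot"
    using F by (simp add: ultrafilter_def filtermap_bot_iff)
  moreover have "eventually (\<lambda>y. y \<in> K) (filtermap f F)"
    using fK by (simp add: eventually_filtermap)
  ultimately obtain L where L: "L \<in> K" "inf (nhds L) (filtermap f F) \<noteq> bot"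
    using K unfolding compact_filter by blast
  have "eventually (\<lambda>x. f x \<in> S) F" if "open S" "L \<in> S" for S
  proof (rule ccontr)
    assume "\<not> eventually (\<lambda>x. f x \<in> S) F"
    then have "eventually (\<lambda>y. y \<notin> S) (filtermap f F)"
      using F unfolding ultrafilter_def eventually_filtermap by blast
    moreover have "eventually (\<lambda>y. y \<in> S) (nhds L)"
      using that by (rule eventually_nhds_in_open)
    ultimately have "eventually (\<lambda>_. False) (inf (nhds L) (filtermap f F))"
      unfolding eventually_inf by blast
    with L(2) show False
      by (simp add: eventually_False)
  qed
  then show thesis
    using L(1) by (intro that topological_tendstoI) auto
qed

lemma Lim_eq_if_diff_tendsto_0:
  fixes f g :: "'a \<Rightarrow> 'b::real_normed_vector"
  assumes "((\<lambda>x. f x - g x) \<longlongrightarrow> 0) F"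
  shows "Lim F f = Lim F g"
  unfolding t2_space_class.Lim_def using Lim_transform_eq[OF assms] by simp

context vector_space
begin

lemma span_Un_span: "span (span X \<union> span Y) = span (X \<union> Y)"
  by (simp add: span_Un span_span)

lemma span_UN_span: "span (\<Union>i\<in>I. span (X i)) = span (\<Union>i\<in>I. X i)"
proof -
  have "(\<Union>i\<in>I. span (X i)) \<subseteq> span (\<Union>i\<in>I. X i)"
    by (intro UN_least span_mono UN_upper)
  moreover have "(\<Union>i\<in>I. X i) \<subseteq> span (\<Union>i\<in>I. span (X i))"
    using UN_mono[OF order_refl span_superset] span_superset by (rule order_trans)
  ultimately show ?thesis
    by (simp add: span_eq)
qed

lemma dim_empty': "dim {} = 0"
  using dim_eq_card_independent[OF independent_empty] by simp

lemma dim_le_dim_add_card: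
  assumes "V \<subseteq> span (A \<union> C)" "finite A" "finite C"
  shows "dim V \<le> dim A + card C"
proof -
  obtain D where D: "D \<subseteq> A" "independent D" "A \<subseteq> span D" "card D = dim A"
    using basis_exists by blast
  have "span (A \<union> C) \<subseteq> span (D \<union> C)"
    using D(3) span_superset[of "D \<union> C"] span_mono[of D "D \<union> C"]
    by (intro span_minimal[OF _ subspace_span]) blast
  then have "dim V \<le> card (D \<union> C)"
    using assms D(1) finite_subset by (intro dim_le_card) auto
  also have "\<dots> \<le> dim A + card C"
    using D(4) card_Un_le by metis
  finally show ?thesis .
qed

lemma span_extension_exists:
  assumes "finite S" "U \<subseteq> span S"
  obtains C where "finite C" "S \<subseteq> span (U \<union> C)" "card C + dim U = dim S"
proof -
  obtain D where D: "D \<subseteq> U" "independent D" "U \<subseteq> span D" "card D = dim U"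
    using basis_exists by blast
  obtain E where E: "D \<subseteq> E" "E \<subseteq> span S" "independent E" "span S \<subseteq> span E"
    using maximal_independent_subset_extend[of D "span S"] D(1,2) assms(2) by blast
  have "finite E"
    using independent_span_bound[OF assms(1) E(3,2)] by blast
  have "card E = dim S"
    using basis_card_eq_dim[OF E(2,4,3)] by simp
  show thesis
  proof
    show "finite (E - D)"
      using \<open>finite E\<close> by simp
    have "E \<subseteq> U \<union> (E - D)"
      using D(1) by blast
    then show "S \<subseteq> span (U \<union> (E - D))"
      using E(4) span_superset[of S] span_mono by blast
    show "card (E - D) + dim U = dim S"
      using \<open>finite E\<close> \<open>card E = dim S\<close> D(4) E(1) card_Diff_subset[of D E] card_mono[of E D]
      by (simp add: finite_subset)
  qed
qed

end

context vector_space_pair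
begin

lemma dim_Un_image_add_le:
  assumes f: "Vector_Spaces.linear s1 s2 f" and fin: "finite A" "finite S"
    and U: "U \<subseteq> vs1.span S" "f ` U \<subseteq> vs2.span A"
  shows "vs2.dim (A \<union> f ` S) + vs1.dim U \<le> vs2.dim A + vs1.dim S"
proof -
  obtain C where C: "finite C" "S \<subseteq> vs1.span (U \<union> C)" "card C + vs1.dim U = vs1.dim S"
    using vs1.span_extension_exists[OF fin(2) U(1)] .
  have "f ` S \<subseteq> vs2.span (f ` U \<union> f ` C)"
    using C(2) linear_span_image[OF f, of "U \<union> C"] by (auto simp: image_Un)
  also have "\<dots> \<subseteq> vs2.span (A \<union> f ` C)"
    using U(2) vs2.span_mono[of A "A \<union> f ` C"] vs2.span_superset[of "A \<union> f ` C"]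
    by (intro vs2.span_minimal[OF _ vs2.subspace_span]) blast
  finally have "A \<union> f ` S \<subseteq> vs2.span (A \<union> f ` C)"
    using vs2.span_superset by blast
  then have "vs2.dim (A \<union> f ` S) \<le> vs2.dim A + card (f ` C)"
    using fin C(1) by (intro vs2.dim_le_dim_add_card) auto
  with card_image_le[OF C(1), of f] C(3) show ?thesis
    by linarith
qed

lemma dim_UN_image_add_le:
  assumes "finite P" "finite A"
    and "\<And>p. p \<in> P \<Longrightarrow> Vector_Spaces.linear s1 s2 (f p)" "\<And>p. p \<in> P \<Longrightarrow> finite (S p)"
    and "\<And>p. p \<in> P \<Longrightarrow> U p \<subseteq> vs1.span (S p)" "\<And>p. p \<in> P \<Longrightarrow> f p ` U p \<subseteq> vs2.span A"
  shows "vs2.dim (A \<union> (\<Union>p\<in>P. f p ` S p)) + (\<Sum>p\<in>P. vs1.dim (U p))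
    \<le> vs2.dim A + (\<Sum>p\<in>P. vs1.dim (S p))"
  using assms(1,3-)
proof (induction P rule: finite_induct)
  case empty
  then show ?case by simp
next
  case (insert p P)
  let ?A = "A \<union> (\<Union>q\<in>P. f q ` S q)"
  have "vs2.dim (?A \<union> f p ` S p) + vs1.dim (U p) \<le> vs2.dim ?A + vs1.dim (S p)"
  proof (rule dim_Un_image_add_le)
    show "f p ` U p \<subseteq> vs2.span ?A"
      using insert.prems(4)[of p] vs2.span_mono[of A ?A] by blast
  qed (use insert assms(2) in auto)
  moreover have "A \<union> (\<Union>q\<in>insert p P. f q ` S q) = ?A \<union> f p ` S p"
    by blast
  ultimately show ?case
    using insert by simp
qed

end

definition scaled_generators :: "('r \<Rightarrow> 'm \<Rightarrow> 'm) \<Rightarrow> 'r set \<Rightarrow> 'm list \<Rightarrow> 'm set" where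
  "scaled_generators act V xs = (\<Union>i<length xs. (\<lambda>w. act w (xs ! i)) ` V)"

definition folner_ratio :: "('k::field \<Rightarrow> 'r::ring_1 \<Rightarrow> 'r) \<Rightarrow> ('r \<Rightarrow> 'm::ab_group_add \<Rightarrow> 'm) \<Rightarrow>
    (nat \<Rightarrow> 'r set) \<Rightarrow> 'm list \<Rightarrow> nat \<Rightarrow> real" where
  "folner_ratio s act W xs n =
    real (vector_space.dim (mscale s act) (scaled_generators act (W n) xs))
    / real (vector_space.dim s (W n))"

lemma rank_gen_eq_Lim_folner_ratio: "rank_gen s act \<omega> W xs = Lim \<omega> (folner_ratio s act W xs)"
  unfolding rank_gen_def folner_ratio_def scaled_generators_def ..

(* The Foelner condition for r = 0 rules out dim (W n) = 0, where the ratio would be 0 / 0 = 0. *)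
lemma folner_exhaustion_dim_pos:
  assumes "folner_exhaustion s W"
  shows "eventually (\<lambda>n. 0 < vector_space.dim s (W n)) sequentially"
proof -
  have "(\<lambda>n. real (vector_space.dim s ((\<lambda>w. w * 0) ` W n \<union> W n)) / real (vector_space.dim s (W n)))
    \<longlonglongrightarrow> 1"
    using assms unfolding folner_exhaustion_def by blast
  then have "eventually (\<lambda>n. 0 < real (vector_space.dim s ((\<lambda>w. w * 0) ` W n \<union> W n))
    / real (vector_space.dim s (W n))) sequentially"
    by (rule order_tendstoD) simp
  then show ?thesis
    by eventually_elim (auto simp: zero_less_divide_iff)
qed

locale algebra_module =
  fixes s :: "'k::field \<Rightarrow> 'r::ring_1 \<Rightarrow> 'r" and act :: "'r \<Rightarrow> 'm::ab_group_add \<Rightarrow> 'm"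
  assumes k_algebra: "k_algebra s" and left_module: "left_module act"
begin

lemma act_one: "act 1 x = x"
  and act_mult: "act (a * b) x = act a (act b x)"
  and act_add_left: "act (a + b) x = act a x + act b x"
  and act_add_right: "act a (x + y) = act a x + act a y"
  using left_module unfolding left_module_def by blast+

lemma act_zero_right: "act a 0 = 0"
  using act_add_right[of a 0 0] by simp

lemma act_sum_right: "finite I \<Longrightarrow> act a (\<Sum>i\<in>I. x i) = (\<Sum>i\<in>I. act a (x i))"
  by (induction I rule: finite_induct) (simp_all add: act_zero_right act_add_right)

sublocale R: vector_space s
  using k_algebra unfolding k_algebra_def by blast

lemma scale_mult_left: "s c a * b = s c (a * b)"
  using k_algebra unfolding k_algebra_def by metis

lemma scale_eq_mult: "s c a = s c 1 * a"
  using scale_mult_left[of c 1 a] by simp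

sublocale M: vector_space "mscale s act"
proof unfold_locales
  fix a b :: 'k and x y :: 'm
  show "mscale s act a (x + y) = mscale s act a x + mscale s act a y"
    unfolding mscale_def by (rule act_add_right)
  show "mscale s act (a + b) x = mscale s act a x + mscale s act b x"
    unfolding mscale_def by (simp add: R.scale_left_distrib act_add_left)
  show "mscale s act a (mscale s act b x) = mscale s act (a * b) x"
    unfolding mscale_def by (simp add: act_mult[symmetric] scale_mult_left)
  show "mscale s act 1 x = x"
    unfolding mscale_def by (simp add: act_one)
qed

sublocale pair: vector_space_pair s "mscale s act" ..

lemma linear_mult_right: "Vector_Spaces.linear s s (\<lambda>w. w * c)"
  unfolding Vector_Spaces.linear_iff
  by (simp add: distrib_right scale_mult_left R.vector_space_axioms)

lemma linear_act_left: "Vector_Spaces.linear s (mscale s act) (\<lambda>w. act w x)"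
  unfolding Vector_Spaces.linear_iff
proof (intro conjI allI)
  show "vector_space s" "vector_space (mscale s act)"
    by (fact R.vector_space_axioms M.vector_space_axioms)+
  fix c w y
  show "act (w + y) x = act w x + act y x"
    by (rule act_add_left)
  show "act (s c w) x = mscale s act c (act w x)"
    unfolding mscale_def act_mult[symmetric] scale_eq_mult[of c w] ..
qed

lemma mult_right_span: "(\<lambda>w. w * c) ` R.span B = R.span ((\<lambda>w. w * c) ` B)"
proof -
  interpret RR: vector_space_pair s s ..
  show ?thesis
    by (rule RR.linear_span_image[OF linear_mult_right, symmetric])
qed

lemma act_left_span: "(\<lambda>w. act w x) ` R.span B = M.span ((\<lambda>w. act w x) ` B)"
  by (rule pair.linear_span_image[OF linear_act_left, symmetric])

lemma span_scaled_generators_span: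
  "M.span (scaled_generators act (R.span B) xs) = M.span (scaled_generators act B xs)"
  unfolding scaled_generators_def act_left_span by (rule M.span_UN_span)

lemma dim_scaled_generators_le:
  assumes "finite B"
  shows "M.dim (scaled_generators act (R.span B) ys) \<le> length ys * R.dim B"
proof -
  have "M.dim ({} \<union> (\<Union>j\<in>{..<length ys}. (\<lambda>w. act w (ys ! j)) ` B)) + (\<Sum>j<length ys. R.dim {})
    \<le> M.dim {} + (\<Sum>j<length ys. R.dim B)"
    by (rule pair.dim_UN_image_add_le) (use assms linear_act_left in auto)
  then show ?thesis
    using M.span_eq_dim[OF span_scaled_generators_span]
    by (simp add: scaled_generators_def R.dim_empty' M.dim_empty')
qed

lemma scaled_generators_change_subset:
  assumes ys: "\<And>j. j < length ys \<Longrightarrow> ys ! j = (\<Sum>i<length xs. act (c j i) (xs ! i))"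
  shows "scaled_generators act (R.span B) ys \<subseteq> M.span (\<Union>(j, i)\<in>{..<length ys} \<times> {..<length xs}.
    (\<lambda>w. act w (xs ! i)) ` ((\<lambda>w. w * c j i) ` B \<union> B))" (is "_ \<subseteq> M.span ?T")
proof (unfold scaled_generators_def, safe)
  fix j w
  assume j: "j < length ys" and w: "w \<in> R.span B"
  have "act (w * c j i) (xs ! i) \<in> M.span ?T" if i: "i < length xs" for i
  proof -
    have "w * c j i \<in> R.span ((\<lambda>w. w * c j i) ` B \<union> B)"
      using w mult_right_span[of "c j i" B] R.span_mono[of _ "(\<lambda>w. w * c j i) ` B \<union> B"] by blast
    then have "act (w * c j i) (xs ! i) \<in> M.span ((\<lambda>w. act w (xs ! i)) ` ((\<lambda>w. w * c j i) ` B \<union> B))"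
      unfolding act_left_span[symmetric] by blast
    also have "\<dots> \<subseteq> M.span ?T"
      using i j by (intro M.span_mono) auto
    finally show ?thesis .
  qed
  then show "act w (ys ! j) \<in> M.span ?T"
    unfolding ys[OF j] act_sum_right[OF finite_lessThan] act_mult[symmetric]
    by (intro M.span_sum) simp
qed

lemma dim_scaled_generators_change_le:
  assumes B: "finite B"
    and ys: "\<And>j. j < length ys \<Longrightarrow> ys ! j = (\<Sum>i<length xs. act (c j i) (xs ! i))"
  shows "M.dim (scaled_generators act (R.span B) ys) + length ys * length xs * R.dim B
    \<le> M.dim (scaled_generators act (R.span B) xs)
      + (\<Sum>j<length ys. \<Sum>i<length xs. R.dim ((\<lambda>w. w * c j i) ` R.span B \<union> R.span B))"
proof -
  define P where "P = {..<length ys} \<times> {..<length xs}"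
  define f where "f p = (\<lambda>w. act w (xs ! snd p))" for p :: "nat \<times> nat"
  define S where "S p = (\<lambda>w. w * c (fst p) (snd p)) ` B \<union> B" for p
  define A where "A = scaled_generators act B xs"
  have "finite A"
    unfolding A_def scaled_generators_def using B by simp
  have key: "M.dim (A \<union> (\<Union>p\<in>P. f p ` S p)) + (\<Sum>p\<in>P. R.dim B) \<le> M.dim A + (\<Sum>p\<in>P. R.dim (S p))"
  proof (rule pair.dim_UN_image_add_le)
    show "B \<subseteq> R.span (S p)" for p
      unfolding S_def using R.span_superset by blast
    show "f p ` B \<subseteq> M.span A" if "p \<in> P" for p
      using that M.span_superset unfolding P_def f_def A_def scaled_generators_def by fastforce
    show "Vector_Spaces.linear s (mscale s act) (f p)" for p
      unfolding f_def by (rule linear_act_left)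
    show "finite (S p)" for p
      unfolding S_def using B by simp
  qed (simp_all add: P_def \<open>finite A\<close>)
  have "(\<Union>(j, i)\<in>P. (\<lambda>w. act w (xs ! i)) ` ((\<lambda>w. w * c j i) ` B \<union> B))
    \<subseteq> A \<union> (\<Union>p\<in>P. f p ` S p)"
    unfolding f_def S_def by force
  then have "scaled_generators act (R.span B) ys \<subseteq> M.span (A \<union> (\<Union>p\<in>P. f p ` S p))"
    using scaled_generators_change_subset[OF ys, of B] M.span_mono unfolding P_def by blast
  then have "M.dim (scaled_generators act (R.span B) ys) \<le> M.dim (A \<union> (\<Union>p\<in>P. f p ` S p))"
    using M.dim_le_dim_add_card[of _ _ "{}"] \<open>finite A\<close> B by (simp add: P_def S_def)
  moreover have "M.dim A = M.dim (scaled_generators act (R.span B) xs)"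
    unfolding A_def using M.span_eq_dim[OF span_scaled_generators_span] by simp
  moreover have "(\<Sum>p\<in>P. R.dim (S p))
    = (\<Sum>j<length ys. \<Sum>i<length xs. R.dim ((\<lambda>w. w * c j i) ` R.span B \<union> R.span B))"
  proof -
    have "R.span (S (j, i)) = R.span ((\<lambda>w. w * c j i) ` R.span B \<union> R.span B)" for j i
      unfolding S_def mult_right_span R.span_Un_span by simp
    then show ?thesis
      unfolding P_def sum.cartesian_product by (intro sum.cong) (auto intro: R.span_eq_dim)
  qed
  moreover have "(\<Sum>p\<in>P. R.dim B) = length ys * length xs * R.dim B"
    by (simp add: P_def)
  ultimately show ?thesis
    using key by linarith
qed

lemma folner_ratio_bounds:
  assumes "folner_exhaustion s W"
  shows "folner_ratio s act W ys n \<in> {0..real (length ys)}"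
proof -
  obtain B where B: "finite B" "W n = R.span B"
    using assms unfolding folner_exhaustion_def by blast
  have "M.dim (scaled_generators act (W n) ys) \<le> length ys * R.dim (W n)"
    using dim_scaled_generators_le[OF B(1)] unfolding B(2) by simp
  then have "real (M.dim (scaled_generators act (W n) ys)) \<le> real (length ys) * real (R.dim (W n))"
    by (simp only: of_nat_mult[symmetric] of_nat_le_iff)
  then show ?thesis
    unfolding folner_ratio_def by (cases "R.dim (W n) = 0") (simp_all add: divide_le_eq)
qed

lemma folner_ratio_le_add:
  assumes fo: "folner_exhaustion s W"
    and ys: "\<And>j. j < length ys \<Longrightarrow> ys ! j = (\<Sum>i<length xs. act (c j i) (xs ! i))"
  shows "eventually (\<lambda>n. folner_ratio s act W ys n \<le> folner_ratio s act W xs n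
    + (\<Sum>j<length ys. \<Sum>i<length xs.
        real (R.dim ((\<lambda>w. w * c j i) ` W n \<union> W n)) / real (R.dim (W n)) - 1)) sequentially"
  using folner_exhaustion_dim_pos[OF fo]
proof eventually_elim
  case (elim n)
  obtain B where B: "finite B" "W n = R.span B"
    using fo unfolding folner_exhaustion_def by blast
  define d where "d = real (R.dim (W n))"
  define u where "u j i = real (R.dim ((\<lambda>w. w * c j i) ` W n \<union> W n))" for j i
  have "0 < d"
    using elim unfolding d_def by simp
  have "M.dim (scaled_generators act (W n) ys) + length ys * length xs * R.dim (W n)
    \<le> M.dim (scaled_generators act (W n) xs)
      + (\<Sum>j<length ys. \<Sum>i<length xs. R.dim ((\<lambda>w. w * c j i) ` W n \<union> W n))"
    using dim_scaled_generators_change_le[OF B(1) ys] unfolding B(2) by simp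
  then have "real (M.dim (scaled_generators act (W n) ys))
    \<le> real (M.dim (scaled_generators act (W n) xs)) + (\<Sum>j<length ys. \<Sum>i<length xs. u j i)
      - real (length ys * length xs) * d"
    unfolding u_def d_def by (simp flip: of_nat_add of_nat_mult of_nat_sum)
  then have "folner_ratio s act W ys n \<le> folner_ratio s act W xs n
    + ((\<Sum>j<length ys. \<Sum>i<length xs. u j i) / d - real (length ys * length xs))"
    unfolding folner_ratio_def d_def[symmetric] using \<open>0 < d\<close> by (simp add: field_simps)
  also have "(\<Sum>j<length ys. \<Sum>i<length xs. u j i) / d - real (length ys * length xs)
    = (\<Sum>j<length ys. \<Sum>i<length xs. u j i / d - 1)"
    by (simp add: sum_subtractf sum_divide_distrib)
  finally show ?case
    unfolding u_def d_def .
qed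

lemma folner_ratio_le_add_null:
  assumes fo: "folner_exhaustion s W" and "generates act xs"
  obtains e where "e \<longlonglongrightarrow> 0"
    "eventually (\<lambda>n. folner_ratio s act W ys n \<le> folner_ratio s act W xs n + e n) sequentially"
proof -
  have "\<forall>j. \<exists>c. ys ! j = (\<Sum>i<length xs. act (c i) (xs ! i))"
    using assms(2) unfolding generates_def by blast
  then obtain c where c: "\<forall>j. ys ! j = (\<Sum>i<length xs. act (c j i) (xs ! i))"
    by (rule choice[THEN exE])
  have "(\<lambda>n. real (R.dim ((\<lambda>w. w * c j i) ` W n \<union> W n)) / real (R.dim (W n))) \<longlonglongrightarrow> 1" for j i
    using fo unfolding folner_exhaustion_def by blast
  then have "(\<lambda>n. \<Sum>j<length ys. \<Sum>i<length xs.
      real (R.dim ((\<lambda>w. w * c j i) ` W n \<union> W n)) / real (R.dim (W n)) - 1) \<longlonglongrightarrow> 0"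
    by (intro tendsto_null_sum) (use tendsto_diff[OF _ tendsto_const[of 1]] in fastforce)
  moreover have "eventually (\<lambda>n. folner_ratio s act W ys n \<le> folner_ratio s act W xs n
    + (\<Sum>j<length ys. \<Sum>i<length xs.
        real (R.dim ((\<lambda>w. w * c j i) ` W n \<union> W n)) / real (R.dim (W n)) - 1)) sequentially"
    using c by (intro folner_ratio_le_add[OF fo]) blast
  ultimately show thesis
    by (rule that)
qed

lemma folner_ratio_diff_tendsto_0:
  assumes fo: "folner_exhaustion s W" and "generates act xs" "generates act ys"
  shows "(\<lambda>n. folner_ratio s act W ys n - folner_ratio s act W xs n) \<longlonglongrightarrow> 0"
proof -
  obtain e1 where e1: "e1 \<longlonglongrightarrow> 0"
    "eventually (\<lambda>n. folner_ratio s act W ys n \<le> folner_ratio s act W xs n + e1 n) sequentially"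
    using folner_ratio_le_add_null[OF fo assms(2)] .
  obtain e2 where e2: "e2 \<longlonglongrightarrow> 0"
    "eventually (\<lambda>n. folner_ratio s act W xs n \<le> folner_ratio s act W ys n + e2 n) sequentially"
    using folner_ratio_le_add_null[OF fo assms(3)] .
  show ?thesis
  proof (rule tendsto_sandwich[of "\<lambda>n. - e2 n" _ _ e1])
    show "eventually (\<lambda>n. - e2 n \<le> folner_ratio s act W ys n - folner_ratio s act W xs n) sequentially"
      using e2(2) by eventually_elim simp
    show "eventually (\<lambda>n. folner_ratio s act W ys n - folner_ratio s act W xs n \<le> e1 n) sequentially"
      using e1(2) by eventually_elim simp
    show "(\<lambda>n. - e2 n) \<longlonglongrightarrow> 0"
      using tendsto_minus[OF e2(1)] by simp
  qed (fact e1(1))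
qed

lemma rank_gen_eq_if_generates:
  assumes "folner_exhaustion s W" "\<omega> \<le> sequentially" "generates act xs" "generates act ys"
  shows "rank_gen s act \<omega> W xs = rank_gen s act \<omega> W ys"
proof -
  have "(\<lambda>n. folner_ratio s act W xs n - folner_ratio s act W ys n) \<longlonglongrightarrow> 0"
    by (rule folner_ratio_diff_tendsto_0[OF assms(1,4,3)])
  then show ?thesis
    unfolding rank_gen_eq_Lim_folner_ratio
    by (intro Lim_eq_if_diff_tendsto_0 tendsto_mono[OF assms(2)])
qed

lemma rank_gen_le_length:
  assumes "folner_exhaustion s W" "ultrafilter \<omega>"
  shows "rank_gen s act \<omega> W ys \<le> real (length ys)"
proof -
  have "eventually (\<lambda>n. folner_ratio s act W ys n \<in> {0..real (length ys)}) \<omega>"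
    by (intro always_eventually allI folner_ratio_bounds[OF assms(1)])
  then obtain L where L: "L \<in> {0..real (length ys)}" "(folner_ratio s act W ys \<longlongrightarrow> L) \<omega>"
    by (rule ultrafilter_tendsto_compact[OF assms(2) compact_Icc])
  have "\<omega> \<noteq> bot"
    using assms(2) unfolding ultrafilter_def by blast
  then have "rank_gen s act \<omega> W ys = L"
    unfolding rank_gen_eq_Lim_folner_ratio using tendsto_Lim[OF _ L(2)] by simp
  with L(1) show ?thesis
    by simp
qed

end

theorem proposition7:
  fixes s :: "'k::field \<Rightarrow> 'r::ring_1 \<Rightarrow> 'r"
    and W :: "nat \<Rightarrow> 'r set"
    and \<omega> :: "nat filter"
    and act :: "'r \<Rightarrow> 'm::ab_group_add \<Rightarrow> 'm"
  assumes "affine_algebra s"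
    and "folner_exhaustion s W"
    and "ultrafilter \<omega>" and "\<omega> \<le> sequentially"
    and "left_module act"
    and "\<exists>xs. generates act xs"
  shows "(\<forall>xs ys. generates act xs \<and> generates act ys \<longrightarrow>
            rank_gen s act \<omega> W xs = rank_gen s act \<omega> W ys)
       \<and> (\<forall>xs. generates act xs \<longrightarrow>
            rank_gen s act \<omega> W xs \<le> real (LEAST n. \<exists>ys. length ys = n \<and> generates act ys))"
proof -
  interpret algebra_module s act
    using assms(1,5) unfolding affine_algebra_def by unfold_locales blast+
  have "rank_gen s act \<omega> W xs \<le> real (LEAST n. \<exists>ys. length ys = n \<and> generates act ys)"
    if "generates act xs" for xs
  proof -
    have "\<exists>ys. length ys = (LEAST n. \<exists>ys. length ys = n \<and> generates act ys) \<and> generates act ys"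
      by (rule LeastI_ex) (use that in blast)
    then obtain ys where "length ys = (LEAST n. \<exists>ys. length ys = n \<and> generates act ys)"
      "generates act ys"
      by blast
    with that show ?thesis
      using rank_gen_eq_if_generates[OF assms(2,4)] rank_gen_le_length[OF assms(2,3)] by metis
  qed
  then show ?thesis
    using rank_gen_eq_if_generates[OF assms(2,4)] by blast
qed

end
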